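(* Let $\vec{G}$ be a finite directed rooted tree in which every edge is directed away from the root. Then $\operatorname{adim}(\vec{G}) = \operatorname{bdim}(\vec{G})$.
   Context: For a finite simple directed graph $\vec{G}$ and $u,v\in V(\vec{G})$, $d(u,v)$ is the length of a shortest directed path from $u$ to $v$, or $\infty$ if none exists; for a nonnegative integer $k$, $d_k(u,v)=\min(d(u,v),k+1)$. A function $f:V(\vec{G})\to\mathbb{Z}_{\geq 0}$ is a resolving broadcast if for any distinct $x,y\in V(\vec{G})$ there is $z$ with $f(z)>0$ and $d_{f(z)}(z,x)\neq d_{f(z)}(z,y)$. The broadcast dimension $\operatorname{bdim}(\vec{G})$ is the minimum of $\sum_{v}f(v)$ over all resolving broadcasts $f$. A set $A\subseteq V(\vec{G})$ is an adjacency resolving set if for any distinct $x,y$ there is $z\in A$ with $d_1(z,x)\neq d_1(z,y)$; the adjacency dimension $\operatorname{adim}(\vec{G})$ is the minimum cardinality of such a set (equivalently, the minimum of $\sum_v f(v)$ over resolving broadcasts with values in $\{0,1\}$). *)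

theory Defs
  imports Main "HOL-Library.Extended_Nat"
begin

definition simple_digraph :: "'a set \<Rightarrow> ('a \<times> 'a) set \<Rightarrow> bool" where
  "simple_digraph V E \<longleftrightarrow> finite V \<and> E \<subseteq> V \<times> V \<and> (\<forall>v. (v, v) \<notin> E)"

definition ddist :: "('a \<times> 'a) set \<Rightarrow> 'a \<Rightarrow> 'a \<Rightarrow> enat" where
  "ddist E u v = (if \<exists>n. (u, v) \<in> E ^^ n then enat (LEAST n. (u, v) \<in> E ^^ n) else \<infinity>)"

definition ddist_k :: "('a \<times> 'a) set \<Rightarrow> nat \<Rightarrow> 'a \<Rightarrow> 'a \<Rightarrow> enat" where
  "ddist_k E k u v = min (ddist E u v) (enat (k + 1))"

definition resolving_broadcast :: "'a set \<Rightarrow> ('a \<times> 'a) set \<Rightarrow> ('a \<Rightarrow> nat) \<Rightarrow> bool" where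
  "resolving_broadcast V E f \<longleftrightarrow>
     (\<forall>x\<in>V. \<forall>y\<in>V. x \<noteq> y \<longrightarrow>
        (\<exists>z\<in>V. f z > 0 \<and> ddist_k E (f z) z x \<noteq> ddist_k E (f z) z y))"

definition bdim :: "'a set \<Rightarrow> ('a \<times> 'a) set \<Rightarrow> nat" where
  "bdim V E = (LEAST s. \<exists>f. resolving_broadcast V E f \<and> (\<Sum>v\<in>V. f v) = s)"

definition adjacency_resolving :: "'a set \<Rightarrow> ('a \<times> 'a) set \<Rightarrow> 'a set \<Rightarrow> bool" where
  "adjacency_resolving V E A \<longleftrightarrow> A \<subseteq> V \<and>
     (\<forall>x\<in>V. \<forall>y\<in>V. x \<noteq> y \<longrightarrow> (\<exists>z\<in>A. ddist_k E 1 z x \<noteq> ddist_k E 1 z y))"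

definition adim :: "'a set \<Rightarrow> ('a \<times> 'a) set \<Rightarrow> nat" where
  "adim V E = (LEAST s. \<exists>A. adjacency_resolving V E A \<and> card A = s)"

definition out_tree :: "'a set \<Rightarrow> ('a \<times> 'a) set \<Rightarrow> 'a \<Rightarrow> bool" where
  "out_tree V E r \<longleftrightarrow> simple_digraph V E \<and> r \<in> V \<and>
     (\<forall>u. (u, r) \<notin> E) \<and>
     (\<forall>v\<in>V - {r}. \<exists>!u. (u, v) \<in> E) \<and>
     (\<forall>v\<in>V. (r, v) \<in> E\<^sup>*)"

end

theory Submission
  imports Defs
begin

text \<open>
  A resolving broadcast \<open>f\<close> costs one unit for each broadcasting vertex and one
  further unit for each distance \<open>2, \<dots>, f z\<close> reached by a broadcasting vertex \<open>z\<close>.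
  Let \<open>A\<close> consist of the broadcasting vertices together with the vertices that hear a
  broadcast but neither broadcast nor have a broadcasting parent. Such a listener is
  determined by its nearest broadcaster \<open>z\<close> and the distance \<open>d \<in> {2..f z}\<close> to it: every
  other broadcaster that hears it is an ancestor of \<open>z\<close>, because the ancestors of a vertex
  form a chain, and so it cannot separate two listeners sharing \<open>(z, d)\<close>. Hence
  \<open>card A \<le> \<Sum> f\<close>. Two vertices outside \<open>A\<close> are separated at distance one by a parent
  in \<open>A\<close>, unless they are siblings or hear no broadcast at all; in both exceptional cases
  \<open>f\<close> would not separate them either. The inequality \<open>bdim \<le> adim\<close> holds in every digraph.
\<close>

lemma ddist_eq_enat_iff:
  "ddist E u v = enat n \<longleftrightarrow> (u, v) \<in> E ^^ n \<and> (\<forall>m<n. (u, v) \<notin> E ^^ m)"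
proof
  assume dist: "ddist E u v = enat n"
  then have ex: "\<exists>n. (u, v) \<in> E ^^ n"
    by (auto simp: ddist_def split: if_splits)
  with dist have "n = (LEAST n. (u, v) \<in> E ^^ n)"
    by (simp add: ddist_def)
  with ex show "(u, v) \<in> E ^^ n \<and> (\<forall>m<n. (u, v) \<notin> E ^^ m)"
    by (metis LeastI_ex not_less_Least)
next
  assume walk: "(u, v) \<in> E ^^ n \<and> (\<forall>m<n. (u, v) \<notin> E ^^ m)"
  then have "(LEAST n. (u, v) \<in> E ^^ n) = n"
    by (metis (mono_tags, lifting) Least_equality not_less)
  with walk show "ddist E u v = enat n"
    by (auto simp: ddist_def)
qed

lemma ddist_le_if_relpow: "(u, v) \<in> E ^^ n \<Longrightarrow> ddist E u v \<le> enat n"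
  unfolding ddist_def by (auto intro: Least_le)

lemma relpow_if_ddist_eq: "ddist E u v = enat n \<Longrightarrow> (u, v) \<in> E ^^ n"
  by (simp add: ddist_eq_enat_iff)

lemma ddist_triangle: "ddist E u w \<le> ddist E u v + ddist E v w"
proof (cases "ddist E u v = \<infinity> \<or> ddist E v w = \<infinity>")
  case True
  then show ?thesis by auto
next
  case False
  then obtain a b where a: "ddist E u v = enat a" and b: "ddist E v w = enat b"
    by auto
  have "(u, w) \<in> E ^^ (a + b)"
    using relpow_if_ddist_eq[OF a] relpow_if_ddist_eq[OF b] by (auto simp: relpow_add)
  then show ?thesis
    using a b by (simp add: ddist_le_if_relpow)
qed

lemma ddist_eq_0_iff: "ddist E u v = 0 \<longleftrightarrow> u = v"
  using ddist_eq_enat_iff[of E u v 0] by (auto simp: zero_enat_def)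

lemma ddist_eq_1_iff: "ddist E u v = 1 \<longleftrightarrow> (u, v) \<in> E \<and> u \<noteq> v"
  using ddist_eq_enat_iff[of E u v 1] by (auto simp: one_enat_def)

lemma ddist_k_eq_0_iff: "ddist_k E k u v = 0 \<longleftrightarrow> u = v"
proof -
  have "min (ddist E u v) (enat (k + 1)) = 0 \<longleftrightarrow> ddist E u v = 0"
    by (cases "ddist E u v") (auto simp: zero_enat_def min_def)
  then show ?thesis
    unfolding ddist_k_def by (simp add: ddist_eq_0_iff)
qed

lemma ddist_k_1_eq_1_iff: "ddist_k E 1 u v = 1 \<longleftrightarrow> (u, v) \<in> E \<and> u \<noteq> v"
proof -
  have "min (ddist E u v) (enat 2) = 1 \<longleftrightarrow> ddist E u v = 1"
    by (cases "ddist E u v") (auto simp: one_enat_def min_def)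
  then show ?thesis
    unfolding ddist_k_def by (simp add: ddist_eq_1_iff numeral_2_eq_2)
qed

lemma ddist_siblings_eq:
  assumes in_unique: "single_valued (E\<inverse>)"
    and "(p, x) \<in> E" "(p, y) \<in> E" "z \<noteq> x" "z \<noteq> y"
  shows "ddist E z x = ddist E z y"
proof -
  have parent: "(z, v) \<in> E ^^ Suc m \<longleftrightarrow> (z, p) \<in> E ^^ m" if "(p, v) \<in> E" for v m
    using that in_unique by (auto dest: single_valuedD)
  have "(z, x) \<in> E ^^ n \<longleftrightarrow> (z, y) \<in> E ^^ n" for n
    using assms parent by (cases n) auto
  then show ?thesis
    unfolding ddist_def by simp
qed

text \<open>The ancestors of a vertex form a chain.\<close>

lemma relpow_diff_if_single_valued_converse:
  assumes in_unique: "single_valued (E\<inverse>)"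
    and "(z, x) \<in> E ^^ b" "(w, x) \<in> E ^^ a" "b \<le> a"
  shows "(w, z) \<in> E ^^ (a - b)"
proof -
  have "(w, x) \<in> E ^^ (a - b) O E ^^ b"
    using assms by (simp flip: relpow_add)
  then obtain z' where z': "(w, z') \<in> E ^^ (a - b)" "(z', x) \<in> E ^^ b"
    by blast
  have "z' = z"
    using relpow_left_unique[OF _ z'(2) assms(2)] in_unique
    by (auto dest: single_valuedD)
  with z' show ?thesis by simp
qed

definition broadcast_reaches :: "('a \<times> 'a) set \<Rightarrow> ('a \<Rightarrow> nat) \<Rightarrow> 'a \<Rightarrow> 'a \<Rightarrow> bool" where
  "broadcast_reaches E f z x \<longleftrightarrow> 0 < f z \<and> ddist E z x \<le> enat (f z)"

lemma broadcast_reaches_ddist_enat: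
  "broadcast_reaches E f z x \<Longrightarrow> \<exists>d\<le>f z. ddist E z x = enat d"
  unfolding broadcast_reaches_def by (metis enat_ile enat_ord_simps(1))

lemma ddist_k_if_not_broadcast_reaches:
  assumes "0 < f z" "\<not> broadcast_reaches E f z x"
  shows "ddist_k E (f z) z x = enat (f z + 1)"
  using assms unfolding broadcast_reaches_def ddist_k_def
  by (metis Suc_eq_plus1 Suc_ile_eq min.absorb2 not_le)

lemma resolving_broadcast_reaches_one:
  assumes "resolving_broadcast V E f" "x \<in> V" "y \<in> V" "x \<noteq> y"
  shows "\<exists>z\<in>V. broadcast_reaches E f z x \<or> broadcast_reaches E f z y"
  using assms ddist_k_if_not_broadcast_reaches unfolding resolving_broadcast_def by metis

lemma resolving_broadcast_const_1: "resolving_broadcast V E (\<lambda>_. 1)"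
  unfolding resolving_broadcast_def by (metis ddist_k_eq_0_iff zero_less_one)

lemma adjacency_resolving_self: "adjacency_resolving V E V"
  unfolding adjacency_resolving_def by (metis ddist_k_eq_0_iff order_refl)

lemma bdim_le: "resolving_broadcast V E f \<Longrightarrow> bdim V E \<le> (\<Sum>v\<in>V. f v)"
  unfolding bdim_def by (blast intro: Least_le)

lemma bdim_attained: "\<exists>f. resolving_broadcast V E f \<and> (\<Sum>v\<in>V. f v) = bdim V E"
  unfolding bdim_def by (rule LeastI_ex) (use resolving_broadcast_const_1 in blast)

lemma adim_le: "adjacency_resolving V E A \<Longrightarrow> adim V E \<le> card A"
  unfolding adim_def by (blast intro: Least_le)

lemma adim_attained: "\<exists>A. adjacency_resolving V E A \<and> card A = adim V E"
  unfolding adim_def by (rule LeastI_ex) (use adjacency_resolving_self in blast)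

lemma resolving_broadcast_of_bool:
  assumes "adjacency_resolving V E A"
  shows "resolving_broadcast V E (\<lambda>z. of_bool (z \<in> A))"
  using assms unfolding adjacency_resolving_def resolving_broadcast_def by fastforce

lemma bdim_le_adim:
  assumes "finite V"
  shows "bdim V E \<le> adim V E"
proof -
  obtain A where A: "adjacency_resolving V E A" "card A = adim V E"
    using adim_attained by blast
  then have "V \<inter> {z. z \<in> A} = A"
    by (auto simp: adjacency_resolving_def)
  then have "(\<Sum>v\<in>V. of_bool (v \<in> A)) = adim V E"
    using assms A(2) by simp
  then show ?thesis
    using bdim_le[OF resolving_broadcast_of_bool[OF A(1)]] by simp
qed

lemma card_support_add_sum_diff_1:
  assumes "finite V"
  shows "card {x\<in>V. 0 < f x} + (\<Sum>x\<in>V. f x - 1) = (\<Sum>x\<in>V. f x)"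
proof -
  have "card {x\<in>V. 0 < f x} = (\<Sum>x\<in>V. of_bool (0 < f x))"
    using assms by (simp add: Int_def)
  also have "\<dots> + (\<Sum>x\<in>V. f x - 1) = (\<Sum>x\<in>V. of_bool (0 < f x) + (f x - 1))"
    by (simp add: sum.distrib)
  also have "\<dots> = (\<Sum>x\<in>V. f x)"
    by (rule sum.cong) auto
  finally show ?thesis .
qed

locale left_unique_resolving_broadcast =
  fixes V :: "'a set" and E :: "('a \<times> 'a) set" and f :: "'a \<Rightarrow> nat"
  assumes finite_V: "finite V"
    and in_unique: "single_valued (E\<inverse>)"
    and resolving: "resolving_broadcast V E f"
begin

definition distant_listeners :: "'a set" where
  "distant_listeners = {x\<in>V. f x = 0 \<and> (\<forall>p\<in>V. (p, x) \<in> E \<longrightarrow> f p = 0) \<and>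
     (\<exists>z\<in>V. broadcast_reaches E f z x)}"

definition nearest_broadcaster :: "'a \<Rightarrow> 'a \<Rightarrow> nat \<Rightarrow> bool" where
  "nearest_broadcaster x z d \<longleftrightarrow> z \<in> V \<and> broadcast_reaches E f z x \<and> ddist E z x = enat d \<and>
     (\<forall>w\<in>V. broadcast_reaches E f w x \<longrightarrow> enat d \<le> ddist E w x)"

lemma nearest_broadcaster_exists:
  assumes "\<exists>z\<in>V. broadcast_reaches E f z x"
  shows "\<exists>z d. nearest_broadcaster x z d"
proof -
  let ?reached_at = "\<lambda>d. \<exists>z\<in>V. broadcast_reaches E f z x \<and> ddist E z x = enat d"
  obtain z0 where z0: "z0 \<in> V" "broadcast_reaches E f z0 x"
    using assms ..
  obtain d0 where "ddist E z0 x = enat d0"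
    using broadcast_reaches_ddist_enat[OF z0(2)] by blast
  with z0 have "\<exists>d. ?reached_at d"
    by blast
  then have "?reached_at (Least ?reached_at)"
    by (rule LeastI_ex)
  then obtain z where z: "z \<in> V" "broadcast_reaches E f z x" "ddist E z x = enat (Least ?reached_at)"
    by blast
  have "enat (Least ?reached_at) \<le> ddist E w x" if w: "w \<in> V" "broadcast_reaches E f w x" for w
  proof -
    obtain a where "ddist E w x = enat a"
      using broadcast_reaches_ddist_enat[OF w(2)] by blast
    with w show ?thesis
      by (metis (mono_tags, lifting) Least_le enat_ord_simps(1))
  qed
  with z show ?thesis
    unfolding nearest_broadcaster_def by blast
qed

lemma nearest_broadcaster_distance:
  assumes "x \<in> distant_listeners" "nearest_broadcaster x z d"
  shows "d \<in> {2..f z}"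
proof -
  have reach: "z \<in> V" "0 < f z" "ddist E z x = enat d" "d \<le> f z"
    using assms(2) by (auto simp: nearest_broadcaster_def broadcast_reaches_def)
  have "d \<noteq> 0"
    using reach assms(1) ddist_eq_0_iff[of E z x] by (auto simp: distant_listeners_def zero_enat_def)
  moreover have "d \<noteq> 1"
    using reach assms(1) ddist_eq_1_iff[of E z x] by (auto simp: distant_listeners_def one_enat_def)
  ultimately show ?thesis
    using reach by auto
qed

text \<open>
  A broadcaster \<open>w\<close> reaching \<open>x\<close> is no closer to \<open>x\<close> than \<open>z\<close>, so it is an
  ancestor of \<open>z\<close> and reaches \<open>y\<close> through \<open>z\<close>.
\<close>

lemma nearest_broadcaster_ddist_le:
  assumes x: "nearest_broadcaster x z d" and y: "nearest_broadcaster y z d"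
    and w: "w \<in> V" "broadcast_reaches E f w x"
  shows "ddist E w y \<le> ddist E w x"
proof -
  obtain a where a: "ddist E w x = enat a"
    using broadcast_reaches_ddist_enat[OF w(2)] by blast
  have zx: "ddist E z x = enat d" and zy: "ddist E z y = enat d"
    using x y by (auto simp: nearest_broadcaster_def)
  have "enat d \<le> ddist E w x"
    using x w unfolding nearest_broadcaster_def by blast
  with a have "d \<le> a"
    by simp
  have "(w, z) \<in> E ^^ (a - d)"
    using relpow_diff_if_single_valued_converse[OF in_unique relpow_if_ddist_eq[OF zx]
        relpow_if_ddist_eq[OF a] \<open>d \<le> a\<close>] .
  have "ddist E w y \<le> ddist E w z + ddist E z y"
    by (rule ddist_triangle)
  also have "\<dots> \<le> enat (a - d) + enat d"
    unfolding zy using \<open>(w, z) \<in> E ^^ (a - d)\<close> by (intro add_right_mono ddist_le_if_relpow)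
  also have "\<dots> = ddist E w x"
    using a \<open>d \<le> a\<close> by simp
  finally show ?thesis .
qed

lemma nearest_broadcaster_ddist_eq:
  assumes "nearest_broadcaster x z d" "nearest_broadcaster y z d"
    and "w \<in> V" "broadcast_reaches E f w x"
  shows "ddist E w y = ddist E w x"
proof -
  have le: "ddist E w y \<le> ddist E w x"
    using assms by (rule nearest_broadcaster_ddist_le)
  with assms(4) have "broadcast_reaches E f w y"
    by (auto simp: broadcast_reaches_def)
  with assms le show ?thesis
    using nearest_broadcaster_ddist_le[of y z d x w] by auto
qed

lemma nearest_broadcaster_unique:
  assumes "x \<in> V" "y \<in> V" "nearest_broadcaster x z d" "nearest_broadcaster y z d"
  shows "x = y"
proof (rule ccontr)
  assume "x \<noteq> y"
  then obtain w where w: "w \<in> V" "0 < f w" "ddist_k E (f w) w x \<noteq> ddist_k E (f w) w y"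
    using resolving assms(1,2) unfolding resolving_broadcast_def by blast
  have "ddist_k E (f w) w x = ddist_k E (f w) w y"
  proof (cases "broadcast_reaches E f w x \<or> broadcast_reaches E f w y")
    case True
    then have "ddist E w x = ddist E w y"
      using nearest_broadcaster_ddist_eq assms(3,4) w(1) by metis
    then show ?thesis
      by (simp add: ddist_k_def)
  next
    case False
    then show ?thesis
      using w(2) by (simp add: ddist_k_if_not_broadcast_reaches)
  qed
  with w(3) show False ..
qed

lemma card_distant_listeners: "card distant_listeners \<le> (\<Sum>z\<in>V. f z - 1)"
proof -
  have "\<forall>x\<in>distant_listeners. \<exists>zd. nearest_broadcaster x (fst zd) (snd zd)"
    using nearest_broadcaster_exists by (auto simp: distant_listeners_def)
  then obtain g where g: "\<forall>x\<in>distant_listeners. nearest_broadcaster x (fst (g x)) (snd (g x))"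
    by (rule bchoice[elim_format]) blast
  have "inj_on g distant_listeners"
  proof (rule inj_onI)
    fix x y
    assume x: "x \<in> distant_listeners" and y: "y \<in> distant_listeners" and "g x = g y"
    then have "nearest_broadcaster x (fst (g x)) (snd (g x))"
      and "nearest_broadcaster y (fst (g x)) (snd (g x))"
      using g by auto
    moreover have "x \<in> V" "y \<in> V"
      using x y by (auto simp: distant_listeners_def)
    ultimately show "x = y"
      using nearest_broadcaster_unique by blast
  qed
  moreover have "g ` distant_listeners \<subseteq> Sigma V (\<lambda>z. {2..f z})"
  proof
    fix p
    assume "p \<in> g ` distant_listeners"
    then obtain x where x: "x \<in> distant_listeners" "p = g x"
      by blast
    with g have "nearest_broadcaster x (fst p) (snd p)"
      by blast
    then show "p \<in> Sigma V (\<lambda>z. {2..f z})"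
      using nearest_broadcaster_distance[OF x(1)] by (cases p) (auto simp: nearest_broadcaster_def)
  qed
  ultimately have "card distant_listeners \<le> card (Sigma V (\<lambda>z. {2..f z}))"
    using finite_V by (intro card_inj_on_le) auto
  also have "\<dots> = (\<Sum>z\<in>V. f z - 1)"
    using finite_V by simp
  finally show ?thesis .
qed

lemma silent_siblings_eq:
  assumes "x \<in> V" "y \<in> V" "(p, x) \<in> E" "(p, y) \<in> E" "f x = 0" "f y = 0"
  shows "x = y"
proof (rule ccontr)
  assume "x \<noteq> y"
  then obtain w where w: "w \<in> V" "0 < f w" "ddist_k E (f w) w x \<noteq> ddist_k E (f w) w y"
    using resolving assms(1,2) unfolding resolving_broadcast_def by blast
  then have "w \<noteq> x" "w \<noteq> y"
    using assms(5,6) by auto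
  then show False
    using w(3) ddist_siblings_eq[OF in_unique assms(3,4)] by (simp add: ddist_k_def)
qed

lemma parent_separates:
  assumes "x \<in> V" "y \<in> V" "x \<noteq> y" "f x = 0" "f y = 0" "(p, x) \<in> E" "p \<noteq> x"
  shows "ddist_k E 1 p x \<noteq> ddist_k E 1 p y"
proof
  assume "ddist_k E 1 p x = ddist_k E 1 p y"
  with assms(6,7) have "(p, y) \<in> E"
    using ddist_k_1_eq_1_iff by metis
  with assms show False
    using silent_siblings_eq by blast
qed

lemma adjacency_resolving_support_Un_distant_listeners:
  "adjacency_resolving V E ({x\<in>V. 0 < f x} \<union> distant_listeners)" (is "adjacency_resolving V E ?A")
  unfolding adjacency_resolving_def
proof (intro conjI ballI impI)
  show "?A \<subseteq> V"
    by (auto simp: distant_listeners_def)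
  fix x y
  assume xy: "x \<in> V" "y \<in> V" "x \<noteq> y"
  show "\<exists>z\<in>?A. ddist_k E 1 z x \<noteq> ddist_k E 1 z y"
  proof (cases "x \<in> ?A \<or> y \<in> ?A")
    case True
    then show ?thesis
      using xy ddist_k_eq_0_iff by metis
  next
    case outside: False
    then have "f x = 0" "f y = 0"
      using xy by auto
    show ?thesis
    proof (cases "\<exists>p\<in>?A. (p, x) \<in> E \<or> (p, y) \<in> E")
      case True
      then show ?thesis
        using parent_separates[of x y] parent_separates[of y x] xy outside \<open>f x = 0\<close> \<open>f y = 0\<close>
        by (metis (no_types, lifting))
    next
      case False
      have "\<not> broadcast_reaches E f z v" if "z \<in> V" "v \<in> {x, y}" for z v
        using that xy outside False by (auto simp: distant_listeners_def)
      then show ?thesis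
        using resolving_broadcast_reaches_one[OF resolving xy] by blast
    qed
  qed
qed

lemma card_support_Un_distant_listeners:
  "card ({x\<in>V. 0 < f x} \<union> distant_listeners) \<le> (\<Sum>x\<in>V. f x)"
  using card_Un_le[of "{x\<in>V. 0 < f x}" distant_listeners] card_distant_listeners
    card_support_add_sum_diff_1[OF finite_V, of f]
  by linarith

end

lemma adim_le_bdim:
  assumes "finite V" "single_valued (E\<inverse>)"
  shows "adim V E \<le> bdim V E"
proof -
  obtain f where f: "resolving_broadcast V E f" "(\<Sum>v\<in>V. f v) = bdim V E"
    using bdim_attained by blast
  interpret left_unique_resolving_broadcast V E f
    using assms f(1) by unfold_locales
  show ?thesis
    using adim_le[OF adjacency_resolving_support_Un_distant_listeners]
      card_support_Un_distant_listeners f(2)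
    by linarith
qed

lemma out_tree_single_valued_converse:
  assumes "out_tree V E r"
  shows "single_valued (E\<inverse>)"
proof (rule single_valuedI)
  fix x p q
  assume "(x, p) \<in> E\<inverse>" "(x, q) \<in> E\<inverse>"
  moreover from this have "x \<in> V - {r}"
    using assms unfolding out_tree_def simple_digraph_def by auto
  ultimately show "p = q"
    using assms unfolding out_tree_def by auto
qed

theorem theorem1p14:
  fixes V :: "'a set" and E :: "('a \<times> 'a) set" and r :: 'a
  assumes "out_tree V E r"
  shows "adim V E = bdim V E"
proof -
  have "finite V"
    using assms by (simp add: out_tree_def simple_digraph_def)
  moreover have "single_valued (E\<inverse>)"
    using assms by (rule out_tree_single_valued_converse)
  ultimately show ?thesis
    using adim_le_bdim bdim_le_adim by (metis antisym)
qed

end
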